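(* Let $\alpha$ be a differentiable real-valued function on the set of real symmetric positive definite $3\times 3$ matrices, and let $h = \frac{\partial \alpha}{\partial C}$ be its gradient, i.e. the symmetric-matrix-valued function such that $D\alpha(C)\,\delta C = \mathrm{tr}\big(h(C)\,\delta C\big)$ for all symmetric $\delta C$. Assume $h$ is isotropic: $R^T h(C) R = h(R^T C R)$ for every rotation $R$ (real $3\times 3$ matrix with $R^TR=I$, $\det R=1$) and every symmetric positive definite $C$. For a symmetric positive definite $B$ set $\frac{\sigma}{\rho} := B^{1/2} h(B) B^{1/2}$. Then the function $\alpha\circ\exp$, defined on real symmetric $3\times 3$ matrices, is differentiable and its gradient at $\ln B$ equals $\frac{\sigma}{\rho}$: for every symmetric positive definite $B$ and every symmetric $\delta$, $$D(\alpha\circ\exp)(\ln B)\,\delta = \mathrm{tr}\Big(\frac{\sigma}{\rho}\,\delta\Big),\qquad\text{i.e.}\qquad \frac{\sigma}{\rho} = \frac{\partial(\alpha\circ\exp)}{\partial(\ln B)}.$$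
   Context: Physical interpretation: for a deformation gradient $F$ with polar decomposition $F=RU$, $C=F^TF$ is the right and $B=FF^T$ the left Cauchy–Green tensor; the hyperelastic constitutive law is $\Sigma/\rho_0 = \frac{\partial\alpha}{\partial C}(C)$ with $\Sigma$ the second Piola–Kirchhoff stress and $\rho_0$ the initial mass density; the Cauchy stress $\sigma$ and current density $\rho$ satisfy $\sigma/\rho = F(\Sigma/\rho_0)F^T$, which under isotropy equals $B^{1/2}h(B)B^{1/2}$. Here $B^{1/2}$ is the symmetric positive definite square root of $B$, $\ln B$ is the unique symmetric matrix with $\exp(\ln B)=B$, and gradients are taken with respect to the inner product $(X,Y)\mapsto \mathrm{tr}(XY)$ on symmetric matrices. *)

theory Defs
  imports "HOL-Analysis.Analysis"
begin

type_synonym mat3 = "real^3^3"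

definition sym_mat :: "mat3 \<Rightarrow> bool" where
  "sym_mat A \<longleftrightarrow> transpose A = A"

definition Sym :: "mat3 set" where
  "Sym = {A. sym_mat A}"

definition spd :: "mat3 \<Rightarrow> bool" where
  "spd A \<longleftrightarrow> sym_mat A \<and> (\<forall>x. x \<noteq> 0 \<longrightarrow> x \<bullet> (A *v x) > 0)"

definition rotation :: "mat3 \<Rightarrow> bool" where
  "rotation R \<longleftrightarrow> transpose R ** R = mat 1 \<and> det R = 1"

primrec matpow :: "mat3 \<Rightarrow> nat \<Rightarrow> mat3" where
  "matpow A 0 = mat 1"
| "matpow A (Suc n) = A ** matpow A n"

definition mexp :: "mat3 \<Rightarrow> mat3" where
  "mexp A = (\<Sum>n. (1 / fact n) *\<^sub>R matpow A n)"

definition msqrt :: "mat3 \<Rightarrow> mat3" where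
  "msqrt B = (THE S. spd S \<and> S ** S = B)"

definition mln :: "mat3 \<Rightarrow> mat3" where
  "mln B = (THE L. sym_mat L \<and> mexp L = B)"

end

theory Submission
  imports Defs
begin

text \<open>
  For symmetric X the derivative of exp at X in direction d is the series
  sum_n 1/n! sum_(k<n) X^k d X^(n-1-k); paired with a matrix H commuting with X, cyclicity
  of the trace collapses it to tr(H exp(X) d). By the chain rule the gradient of alpha o exp
  at ln B is therefore h(B) B, provided h(B) commutes with ln B.
  Diagonalise B = Q diag(b) Q^T by a rotation Q. The half-turns Q diag(+-1, +-1, +-1) Q^T are
  rotations fixing B, so by isotropy they also fix h(B), which forces h(B) to be diagonal in
  the same basis. Hence h(B), ln B and B^(1/2) all commute, and h(B) B = B^(1/2) h(B) B^(1/2).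
\<close>

lemma norm_matrix_mult_le:
  fixes A :: "real^'n^'m" and B :: "real^'k^'n"
  shows "norm (A ** B) \<le> norm A * norm B"
proof -
  have entries: "norm M ^ 2 = (\<Sum>i\<in>UNIV. \<Sum>j\<in>UNIV. (M $ i $ j) ^ 2)" for M :: "real^'a^'b"
    unfolding power2_norm_eq_inner by (simp add: inner_vec_def power2_eq_square)
  have rows: "norm M ^ 2 = (\<Sum>i\<in>UNIV. norm (M $ i) ^ 2)" for M :: "real^'a^'b"
    by (simp add: power2_norm_eq_inner inner_vec_def)
  have cols: "(\<Sum>j\<in>UNIV. norm (column j B) ^ 2) = norm B ^ 2"
    unfolding entries power2_norm_eq_inner by (simp add: inner_vec_def column_def power2_eq_square) (rule sum.swap)
  have "norm (A ** B) ^ 2 = (\<Sum>i\<in>UNIV. \<Sum>j\<in>UNIV. (A $ i \<bullet> column j B) ^ 2)"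
    by (simp add: entries matrix_matrix_mult_def inner_vec_def column_def mult.commute)
  also have "\<dots> \<le> (\<Sum>i\<in>UNIV. \<Sum>j\<in>UNIV. norm (A $ i) ^ 2 * norm (column j B) ^ 2)"
    by (intro sum_mono) (simp add: power_mult_distrib[symmetric] abs_le_square_iff[symmetric] Cauchy_Schwarz_ineq2)
  also have "\<dots> = (norm A * norm B) ^ 2"
    by (simp add: sum_distrib_left[symmetric] sum_distrib_right[symmetric] cols rows[of A] power_mult_distrib)
  finally show ?thesis
    by (rule power2_le_imp_le) simp
qed

lemma bounded_bilinear_matrix_mult:
  "bounded_bilinear ((**) :: real^'n^'m \<Rightarrow> real^'k^'n \<Rightarrow> real^'k^'m)"
proof (rule bounded_bilinear.intro)
  show "\<exists>K. \<forall>A B. norm (A ** B :: real^'k^'m) \<le> norm A * norm B * K"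
    using norm_matrix_mult_le by (metis mult.right_neutral)
qed (simp_all add: matrix_add_ldistrib matrix_scalar_ac scalar_matrix_assoc,
     simp add: matrix_matrix_mult_def vec_eq_iff sum.distrib algebra_simps)

section \<open>The matrix exponential and its derivative\<close>

lemma eventually_uniform_series_tail_le:
  fixes f :: "nat \<Rightarrow> 'a \<Rightarrow> 'b::real_normed_vector \<Rightarrow> 'c::banach"
  assumes M: "summable M" and f: "\<And>n x h. x \<in> S \<Longrightarrow> norm (f n x h) \<le> M n * norm h"
    and "e > 0"
  shows "\<forall>\<^sub>F n in sequentially. \<forall>x\<in>S. \<forall>h. norm ((\<Sum>i<n. f i x h) - (\<Sum>i. f i x h)) \<le> e * norm h"
proof -
  obtain N where N: "\<And>n. n \<ge> N \<Longrightarrow> norm (\<Sum>i. M (i + n)) < e"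
    using suminf_exist_split[OF \<open>e > 0\<close> M] by blast
  have M_shift: "summable (\<lambda>i. M (i + n))" for n
    using M by (simp add: summable_iff_shift)
  have "norm ((\<Sum>i<n. f i x h) - (\<Sum>i. f i x h)) \<le> e * norm h" if "n \<ge> N" "x \<in> S" for n x h
  proof -
    have f_sum: "summable (\<lambda>i. f i x h)"
      by (rule summable_comparison_test[of _ "\<lambda>i. M i * norm h"])
         (use f[OF \<open>x \<in> S\<close>] M in \<open>auto intro: summable_mult2\<close>)
    have "norm ((\<Sum>i<n. f i x h) - (\<Sum>i. f i x h)) = norm (\<Sum>i. f (i + n) x h)"
      using suminf_minus_initial_segment[OF f_sum, of n] by (simp add: norm_minus_commute)
    also have "\<dots> \<le> (\<Sum>i. M (i + n) * norm h)"
      by (rule norm_suminf_le) (use f[OF \<open>x \<in> S\<close>] M_shift in \<open>auto intro: summable_mult2\<close>)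
    also have "\<dots> = (\<Sum>i. M (i + n)) * norm h"
      by (rule suminf_mult2[symmetric, OF M_shift])
    also have "\<dots> \<le> e * norm h"
      using N[OF \<open>n \<ge> N\<close>] by (intro mult_right_mono) auto
    finally show ?thesis .
  qed
  then show ?thesis
    unfolding eventually_sequentially by blast
qed

lemma norm_mult_matpow_le: "norm (E ** matpow X n) \<le> norm E * norm X ^ n"
proof (induction n arbitrary: E)
  case (Suc n)
  have "norm (E ** matpow X (Suc n)) = norm ((E ** X) ** matpow X n)"
    by (simp add: matrix_mul_assoc)
  also have "\<dots> \<le> norm E * norm X * norm X ^ n"
    using Suc[of "E ** X"] norm_matrix_mult_le[of E X]
    by (meson mult_right_mono order_trans zero_le_power norm_ge_zero)
  finally show ?case by (simp add: mult.assoc)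
qed simp

lemma summable_mexp: "summable (\<lambda>n. (1 / fact n) *\<^sub>R matpow A n)"
proof (rule summable_comparison_test)
  show "\<exists>N. \<forall>n\<ge>N. norm ((1 / fact n) *\<^sub>R matpow A n) \<le> norm (mat 1 :: mat3) * (norm A ^ n / fact n)"
    using norm_mult_matpow_le[of "mat 1" A] by (auto simp: divide_right_mono)
  show "summable (\<lambda>n. norm (mat 1 :: mat3) * (norm A ^ n / fact n))"
    by (intro summable_mult) (use summable_exp[of "norm A"] in \<open>simp add: field_simps\<close>)
qed

lemma mexp_sums: "(\<lambda>n. (1 / fact n) *\<^sub>R matpow A n) sums mexp A"
  unfolding mexp_def by (rule summable_sums[OF summable_mexp])

primrec dmatpow :: "mat3 \<Rightarrow> mat3 \<Rightarrow> nat \<Rightarrow> mat3" where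
  "dmatpow X E 0 = 0"
| "dmatpow X E (Suc n) = E ** matpow X n + X ** dmatpow X E n"

definition dmexp :: "mat3 \<Rightarrow> mat3 \<Rightarrow> mat3" where
  "dmexp X E = (\<Sum>n. (1 / fact n) *\<^sub>R dmatpow X E n)"

lemma matpow_has_derivative:
  "((\<lambda>X. matpow X n) has_derivative (\<lambda>E. dmatpow X E n)) (at X within S)"
proof (induction n)
  case (Suc n)
  have "((\<lambda>Y. Y ** matpow Y n) has_derivative (\<lambda>E. X ** dmatpow X E n + E ** matpow X n)) (at X within S)"
    by (rule bounded_bilinear.FDERIV[OF bounded_bilinear_matrix_mult has_derivative_ident Suc])
  then show ?case
    by (simp add: add.commute)
qed simp

lemma norm_dmatpow_le: "norm (dmatpow X E n) \<le> real n * norm X ^ (n - 1) * norm E"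
proof (induction n)
  case (Suc n)
  have "norm (X ** dmatpow X E n) \<le> norm X * norm (dmatpow X E n)"
    by (rule norm_matrix_mult_le)
  also have "\<dots> \<le> norm X * (real n * norm X ^ (n - 1) * norm E)"
    using Suc.IH by (rule mult_left_mono) simp
  also have "\<dots> = real n * norm X ^ n * norm E"
    by (cases n) (simp_all add: ac_simps)
  finally have "norm (X ** dmatpow X E n) \<le> real n * norm X ^ n * norm E" .
  moreover have "norm (E ** matpow X n) \<le> norm E * norm X ^ n"
    by (rule norm_mult_matpow_le)
  ultimately have "norm (E ** matpow X n) + norm (X ** dmatpow X E n) \<le> real (Suc n) * norm X ^ n * norm E"
    by (simp add: algebra_simps)
  then show ?case
    using norm_triangle_ineq[of "E ** matpow X n" "X ** dmatpow X E n"] by simp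
qed simp

lemma norm_dmexp_term_le:
  assumes "norm X \<le> r"
  shows "norm ((1 / fact n) *\<^sub>R dmatpow X E n) \<le> r ^ (n - 1) / fact (n - 1) * norm E"
proof (cases n)
  case (Suc m)
  have "norm ((1 / fact n) *\<^sub>R dmatpow X E n) = norm (dmatpow X E n) / fact n"
    by simp
  also have "\<dots> \<le> real n * norm X ^ m * norm E / fact n"
    using norm_dmatpow_le[of X E n] Suc by (metis diff_Suc_1 divide_right_mono fact_ge_zero)
  also have "\<dots> = norm X ^ m / fact m * norm E"
    using Suc by (simp add: field_simps del: of_nat_Suc)
  also have "\<dots> \<le> r ^ m / fact m * norm E"
    using assms by (intro mult_right_mono divide_right_mono power_mono) auto
  finally show ?thesis
    using Suc by simp
qed simp

lemma summable_exp_shifted: "summable (\<lambda>n. r ^ (n - 1) / fact (n - 1) :: real)"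
proof -
  have "summable (\<lambda>n. r ^ n / fact n)"
    using summable_exp[of r] by (simp add: field_simps)
  then show ?thesis
    by (subst summable_Suc_iff[symmetric]) simp
qed

lemma summable_dmexp: "summable (\<lambda>n. (1 / fact n) *\<^sub>R dmatpow X E n)"
  by (rule summable_comparison_test[OF _ summable_mult2[OF summable_exp_shifted]])
     (use norm_dmexp_term_le[OF order_refl] in blast)

lemma mexp_has_derivative: "(mexp has_derivative dmexp X) (at X)"
proof -
  define S where "S = ball (0::mat3) (norm X + 1)"
  have "X \<in> S"
    by (simp add: S_def)
  have "\<exists>g. \<forall>Y\<in>S. (\<lambda>n. (1 / fact n) *\<^sub>R matpow Y n) sums g Y \<and> (g has_derivative dmexp Y) (at Y within S)"
  proof (rule has_derivative_series[OF _ _ _ \<open>X \<in> S\<close> mexp_sums])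
    show "((\<lambda>Y. (1 / fact n) *\<^sub>R matpow Y n) has_derivative (\<lambda>E. (1 / fact n) *\<^sub>R dmatpow Y E n)) (at Y within S)"
      for n Y by (intro has_derivative_scaleR_right matpow_has_derivative)
    show "\<forall>\<^sub>F n in sequentially. \<forall>Y\<in>S. \<forall>E. norm ((\<Sum>i<n. (1 / fact i) *\<^sub>R dmatpow Y E i) - dmexp Y E) \<le> e * norm E"
      if "e > 0" for e
      unfolding dmexp_def
      by (rule eventually_uniform_series_tail_le[OF summable_exp_shifted[of "norm X + 1"] _ \<open>e > 0\<close>], rule norm_dmexp_term_le)
         (simp add: S_def less_imp_le)
  qed (simp add: S_def)
  then obtain g where g: "\<And>Y. Y \<in> S \<Longrightarrow> (\<lambda>n. (1 / fact n) *\<^sub>R matpow Y n) sums g Y"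
    and g': "(g has_derivative dmexp X) (at X within S)"
    using \<open>X \<in> S\<close> by blast
  have "mexp Y = g Y" if "Y \<in> S" for Y
    using sums_unique2[OF mexp_sums g[OF that]] .
  with g' \<open>X \<in> S\<close> have "(mexp has_derivative dmexp X) (at X within S)"
    by (rule has_derivative_transform[where g=mexp, rotated 2])
  then show ?thesis
    using at_within_open[OF \<open>X \<in> S\<close>] by (simp add: S_def)
qed

lemma matpow_commute: "H ** X = X ** H \<Longrightarrow> H ** matpow X n = matpow X n ** H"
proof (induction n)
  case (Suc n)
  have "H ** matpow X (Suc n) = X ** (H ** matpow X n)"
    using Suc.prems by (simp add: matrix_mul_assoc)
  also have "\<dots> = matpow X (Suc n) ** H"
    using Suc by (simp add: matrix_mul_assoc)
  finally show ?case .
qed simp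

lemma trace_scaleR: "trace (c *\<^sub>R A) = c * trace (A :: real^'n^'n)"
  by (simp add: trace_def sum_distrib_left)

lemma trace_mult_dmatpow:
  "H ** X = X ** H \<Longrightarrow> trace (H ** dmatpow X E (Suc n)) = real (Suc n) * trace (H ** matpow X n ** E)"
proof (induction n arbitrary: H)
  case (Suc n)
  have HX: "(H ** X) ** X = X ** (H ** X)"
    using Suc.prems by (metis matrix_mul_assoc)
  have "trace (H ** dmatpow X E (Suc (Suc n)))
      = trace (H ** E ** matpow X (Suc n)) + trace ((H ** X) ** dmatpow X E (Suc n))"
    by (simp only: dmatpow.simps matrix_add_ldistrib trace_add matrix_mul_assoc)
  also have "trace (H ** E ** matpow X (Suc n)) = trace (matpow X (Suc n) ** (H ** E))"
    by (rule trace_mul_sym)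
  also have "\<dots> = trace (H ** matpow X (Suc n) ** E)"
    using matpow_commute[OF Suc.prems, of "Suc n"] by (simp add: matrix_mul_assoc)
  also have "trace ((H ** X) ** dmatpow X E (Suc n)) = real (Suc n) * trace (H ** matpow X (Suc n) ** E)"
    using Suc.IH[OF HX] by (simp add: matrix_mul_assoc)
  finally show ?case
    by (simp add: algebra_simps)
qed simp

lemma bounded_linear_trace_mult: "bounded_linear (\<lambda>M. trace (H ** M ** E :: real^'n^'n))"
proof -
  have "linear (\<lambda>M. trace (H ** M ** E :: real^'n^'n))"
    by (rule linearI) (simp_all add: matrix_add_ldistrib matrix_matrix_mult_def vec_eq_iff
        trace_def sum.distrib algebra_simps sum_distrib_left)
  then show ?thesis
    by (simp add: linear_conv_bounded_linear)
qed

lemma trace_mult_dmexp: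
  assumes "H ** X = X ** H"
  shows "trace (H ** dmexp X E) = trace (H ** mexp X ** E)"
proof -
  define a where "a n = trace (H ** ((1 / fact n) *\<^sub>R dmatpow X E n) ** mat 1)" for n
  have "a sums trace (H ** dmexp X E ** mat 1)"
    unfolding a_def dmexp_def
    by (rule bounded_linear.sums[OF bounded_linear_trace_mult summable_sums[OF summable_dmexp]])
  moreover have "(\<lambda>n. a (Suc n)) sums trace (H ** mexp X ** E)"
  proof -
    have "a (Suc n) = trace (H ** ((1 / fact n) *\<^sub>R matpow X n) ** E)" for n
      using trace_mult_dmatpow[OF assms, of E n]
      by (simp add: a_def matrix_scalar_ac trace_scaleR scalar_matrix_assoc[symmetric] del: of_nat_Suc)
    then show ?thesis
      using bounded_linear.sums[OF bounded_linear_trace_mult mexp_sums] by simp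
  qed
  moreover have "a 0 = 0"
    by (simp add: a_def trace_def)
  ultimately show ?thesis
    using sums_unique2 by (fastforce simp: sums_Suc_iff)
qed

definition diag :: "('n \<Rightarrow> real) \<Rightarrow> real^'n^'n" where
  "diag d = (\<chi> i j. if i = j then d i else 0)"

lemma diag_1: "diag (\<lambda>i. 1) = mat 1"
  by (simp add: diag_def mat_def)

lemma transpose_diag: "transpose (diag a) = diag a"
  by (simp add: diag_def transpose_def vec_eq_iff)

lemma diag_mult_vector_nth: "(diag a *v y) $ i = a i * y $ i"
  unfolding diag_def matrix_vector_mult_def by (simp add: if_distrib if_distribR cong: if_cong)

lemma diag_mult_nth: "(diag a ** M) $ i $ j = a i * M $ i $ j"
  unfolding diag_def matrix_matrix_mult_def by (simp add: if_distrib if_distribR cong: if_cong)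

lemma mult_diag_nth: "(M ** diag a) $ i $ j = M $ i $ j * a j"
  unfolding diag_def matrix_matrix_mult_def by (simp add: if_distrib if_distribR cong: if_cong)

lemma diag_mult_diag: "diag a ** diag b = diag (\<lambda>i. a i * b i)"
  by (simp add: vec_eq_iff diag_mult_nth) (simp add: diag_def)

lemma diag_eq_iff_offdiag_zero: "M = diag (\<lambda>i. M $ i $ i) \<longleftrightarrow> (\<forall>i j. i \<noteq> j \<longrightarrow> M $ i $ j = 0)"
  by (auto simp: diag_def vec_eq_iff)

lemma orthogonal_matrix_cancel:
  assumes "orthogonal_matrix Q"
  shows "A ** transpose Q ** Q = A" "A ** Q ** transpose Q = A"
  using assms by (simp_all add: orthogonal_matrix_def flip: matrix_mul_assoc)

lemma orthogonal_conj_diag_mult: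
  assumes "orthogonal_matrix Q"
  shows "(Q ** diag a ** transpose Q) ** (Q ** diag b ** transpose Q) = Q ** diag (\<lambda>i. a i * b i) ** transpose Q"
proof -
  have "(Q ** diag a ** transpose Q) ** (Q ** diag b ** transpose Q) = Q ** diag a ** transpose Q ** Q ** diag b ** transpose Q"
    by (simp add: matrix_mul_assoc)
  also have "\<dots> = Q ** (diag a ** diag b) ** transpose Q"
    by (simp add: orthogonal_matrix_cancel[OF assms] matrix_mul_assoc)
  finally show ?thesis
    by (simp add: diag_mult_diag)
qed

lemma orthogonal_conj_diag_commute:
  assumes "orthogonal_matrix Q"
  shows "(Q ** diag a ** transpose Q) ** (Q ** diag b ** transpose Q) = (Q ** diag b ** transpose Q) ** (Q ** diag a ** transpose Q)"
  by (simp add: orthogonal_conj_diag_mult[OF assms] mult.commute)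

lemma transpose_orthogonal_conj_diag: "transpose (Q ** diag a ** transpose Q) = Q ** diag a ** transpose Q"
  by (simp add: matrix_transpose_mul transpose_diag matrix_mul_assoc)

lemma orthogonal_conj_diag_column:
  assumes "orthogonal_matrix Q"
  shows "(Q ** diag b ** transpose Q) *v column k Q = b k *\<^sub>R column k Q"
proof -
  have "(Q ** diag b ** transpose Q) *v column k Q = Q *v (diag b *v axis k 1)"
    by (simp add: orthogonal_matrix_cancel[OF assms] matrix_vector_mul_assoc
        flip: matrix_vector_mult_basis)
  also have "diag b *v axis k 1 = b k *\<^sub>R axis k 1"
    by (simp add: vec_eq_iff diag_mult_vector_nth axis_def)
  finally show ?thesis
    by (simp add: matrix_vector_mult_scaleR matrix_vector_mult_basis)
qed

lemma orthogonal_conj_diag_eigenvector_transfer: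
  assumes P: "orthogonal_matrix P"
    and eigen: "(P ** diag a ** transpose P) *v v = c *\<^sub>R v"
    and ab: "\<And>i. a i = c \<Longrightarrow> b i = c'"
  shows "(P ** diag b ** transpose P) *v v = c' *\<^sub>R v"
proof -
  define w where "w = transpose P *v v"
  have PPt: "P ** transpose P = mat 1" and PtP: "transpose P ** P = mat 1"
    using P by (simp_all add: orthogonal_matrix_def)
  have v: "v = P *v w" and w: "transpose P *v (P *v u) = u" for u
    by (simp_all only: w_def matrix_vector_mul_assoc PPt PtP matrix_vector_mul_lid)
  have conj: "(P ** diag d ** transpose P) *v v = P *v (diag d *v w)" for d
    by (simp only: w_def matrix_vector_mul_assoc matrix_mul_assoc)
  have "P *v (diag a *v w) = P *v (c *\<^sub>R w)"
    using eigen unfolding conj by (simp only: matrix_vector_mult_scaleR v[symmetric])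
  then have "diag a *v w = c *\<^sub>R w"
    by (metis w)
  then have "a i * w $ i = c * w $ i" for i
    by (simp add: vec_eq_iff diag_mult_vector_nth)
  then have "diag b *v w = c' *\<^sub>R w"
    using ab by (auto simp: vec_eq_iff diag_mult_vector_nth)
  then show ?thesis
    by (simp add: conj matrix_vector_mult_scaleR flip: v)
qed

lemma matrix_eq_on_orthonormal_columns:
  fixes A B :: "real^'n^'m" and Q :: "real^'n^'n"
  assumes "orthogonal_matrix Q" and "\<And>k. A *v column k Q = B *v column k Q"
  shows "A = B"
proof -
  have col: "column k (M ** Q) = M *v column k Q" for M :: "real^'n^'m" and k
    by (simp only: matrix_vector_mult_basis[symmetric] matrix_vector_mul_assoc)
  have "column k (A ** Q) = column k (B ** Q)" for k
    by (simp only: col assms(2))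
  then have "A ** Q = B ** Q"
    by (simp add: vec_eq_iff column_def)
  then show ?thesis
    using orthogonal_matrix_cancel(2)[OF assms(1)] by metis
qed

lemma orthogonal_conj_diag_eq_of_image_eq:
  assumes P: "orthogonal_matrix P" and Q: "orthogonal_matrix Q"
    and f: "inj_on f (range l \<union> range m)"
    and eq: "P ** diag (\<lambda>i. f (l i)) ** transpose P = Q ** diag (\<lambda>i. f (m i)) ** transpose Q"
  shows "P ** diag l ** transpose P = Q ** diag m ** transpose Q"
proof (rule matrix_eq_on_orthonormal_columns[OF Q])
  fix k
  have "(P ** diag (\<lambda>i. f (l i)) ** transpose P) *v column k Q = f (m k) *\<^sub>R column k Q"
    unfolding eq by (rule orthogonal_conj_diag_column[OF Q])
  then have "(P ** diag l ** transpose P) *v column k Q = m k *\<^sub>R column k Q"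
    by (rule orthogonal_conj_diag_eigenvector_transfer[OF P]) (use f in \<open>auto dest: inj_onD\<close>)
  then show "(P ** diag l ** transpose P) *v column k Q = (Q ** diag m ** transpose Q) *v column k Q"
    by (simp add: orthogonal_conj_diag_column[OF Q])
qed

section \<open>The spectral theorem for symmetric 3-by-3 matrices\<close>

lemma quadratic_nonneg_imp_linear_coeff_zero:
  fixes c p :: real
  assumes "\<And>t. 0 \<le> 2 * t * c + t\<^sup>2 * p"
  shows "c = 0"
proof (rule ccontr)
  assume "c \<noteq> 0"
  define s where "s = \<bar>p\<bar> + 1"
  have "s > 0"
    by (simp add: s_def add_nonneg_pos)
  have "s\<^sup>2 * (2 * (- c / s) * c + (- c / s)\<^sup>2 * p) = c\<^sup>2 * (p - 2 * s)"
    using \<open>s > 0\<close> by (simp add: field_simps power2_eq_square)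
  also have "\<dots> < 0"
    using \<open>c \<noteq> 0\<close> by (intro mult_pos_neg) (auto simp: s_def)
  finally show False
    using assms[of "- c / s"] by (smt (verit) zero_le_power2 mult_nonneg_nonneg)
qed

lemma symmetric_inner_mult:
  fixes A :: "real^'n^'n"
  assumes "transpose A = A"
  shows "u \<bullet> (A *v v) = v \<bullet> (A *v u)"
  by (metis assms dot_lmul_matrix inner_commute vector_transpose_matrix)

lemma quadratic_form_max_on_subspace:
  fixes A :: "real^'n^'n"
  assumes W: "subspace W" and "x0 \<in> W" "x0 \<noteq> 0"
  obtains u where "u \<in> W" "u \<bullet> u = 1" "\<And>x. x \<in> W \<Longrightarrow> x \<bullet> (A *v x) \<le> (u \<bullet> (A *v u)) * (x \<bullet> x)"
proof -
  define q where "q x = x \<bullet> (A *v x)" for x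
  define S where "S = W \<inter> sphere 0 1"
  have "compact S"
    unfolding S_def by (intro closed_Int_compact closed_subspace W compact_sphere)
  moreover have "x0 /\<^sub>R norm x0 \<in> S"
    using \<open>x0 \<in> W\<close> \<open>x0 \<noteq> 0\<close> W by (auto simp: S_def subspace_scale)
  moreover have "continuous_on S q"
    unfolding q_def by (intro continuous_intros linear_continuous_on matrix_vector_mul_linear)
  ultimately obtain u where "u \<in> S" and u_max: "\<And>y. y \<in> S \<Longrightarrow> q y \<le> q u"
    using continuous_attains_sup by (metis empty_iff)
  then have "u \<in> W" and "u \<bullet> u = 1"
    by (auto simp: S_def norm_eq_1)
  moreover have "q x \<le> q u * (x \<bullet> x)" if "x \<in> W" for x
  proof (cases "x = 0")
    case False
    have "q (x /\<^sub>R norm x) \<le> q u"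
      using u_max[of "x /\<^sub>R norm x"] that False W by (auto simp: S_def subspace_scale)
    then show ?thesis
      using False by (simp add: q_def matrix_vector_mult_scaleR field_simps power2_norm_eq_inner
          flip: power2_eq_square)
  qed (simp add: q_def)
  ultimately show ?thesis
    using that by (simp add: q_def)
qed

lemma symmetric_invariant_subspace_has_eigenvector:
  fixes A :: "real^'n^'n"
  assumes sym: "transpose A = A" and W: "subspace W" and inv: "\<And>x. x \<in> W \<Longrightarrow> A *v x \<in> W"
    and "x0 \<in> W" "x0 \<noteq> 0"
  obtains u c where "u \<in> W" "norm u = 1" "A *v u = c *\<^sub>R u"
proof -
  obtain u where "u \<in> W" "u \<bullet> u = 1"
    and max: "\<And>x. x \<in> W \<Longrightarrow> x \<bullet> (A *v x) \<le> (u \<bullet> (A *v u)) * (x \<bullet> x)"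
    using quadratic_form_max_on_subspace[OF W \<open>x0 \<in> W\<close> \<open>x0 \<noteq> 0\<close>] by blast
  define m where "m = u \<bullet> (A *v u)"
  \<comment> \<open>First-order condition at the maximiser: perturb u along v.\<close>
  have "v \<bullet> (m *\<^sub>R u - A *v u) = 0" if "v \<in> W" for v
  proof (rule quadratic_nonneg_imp_linear_coeff_zero)
    fix t :: real
    have "u + t *\<^sub>R v \<in> W"
      using \<open>u \<in> W\<close> \<open>v \<in> W\<close> W by (simp add: subspace_add subspace_scale)
    then have "(u + t *\<^sub>R v) \<bullet> (A *v (u + t *\<^sub>R v)) \<le> m * ((u + t *\<^sub>R v) \<bullet> (u + t *\<^sub>R v))"
      unfolding m_def by (rule max)
    then show "0 \<le> 2 * t * (v \<bullet> (m *\<^sub>R u - A *v u)) + t\<^sup>2 * (m * (v \<bullet> v) - v \<bullet> (A *v v))"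
      using symmetric_inner_mult[OF sym, of u v] \<open>u \<bullet> u = 1\<close>
      by (simp add: m_def algebra_simps inner_add_left inner_add_right inner_diff_right
          inner_commute power2_eq_square matrix_vector_mult_scaleR)
  qed
  moreover have "m *\<^sub>R u - A *v u \<in> W"
    using \<open>u \<in> W\<close> inv W by (simp add: subspace_diff subspace_scale)
  ultimately have "A *v u = m *\<^sub>R u"
    by (metis inner_eq_zero_iff eq_iff_diff_eq_0)
  then show ?thesis
    using that \<open>u \<in> W\<close> \<open>u \<bullet> u = 1\<close> by (simp add: norm_eq_1)
qed

lemma rotation_from_orthonormal_pair:
  fixes u1 u2 :: "real^3"
  assumes "norm u1 = 1" "norm u2 = 1" "u1 \<bullet> u2 = 0"
  obtains Q where "rotation Q" "column 1 Q = u1" "column 2 Q = u2" "column 3 Q = cross3 u1 u2"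
proof
  define u3 where "u3 = cross3 u1 u2"
  define Q where "Q = transpose (vector [u1, u2, u3] :: real^3^3)"
  show cols: "column 1 Q = u1" "column 2 Q = u2" "column 3 Q = cross3 u1 u2"
    by (simp_all add: Q_def u3_def row_def vec_eq_iff)
  have "norm u3 ^ 2 = 1"
    unfolding u3_def norm_cross using assms by simp
  then have "u3 \<bullet> u3 = 1"
    by (simp add: power2_norm_eq_inner)
  moreover have "u1 \<bullet> u3 = 0" "u2 \<bullet> u3 = 0"
    by (simp_all add: u3_def dot_cross_self)
  ultimately have "transpose Q ** Q = mat 1"
    using assms unfolding matrix_mult_transpose_dot_column
    by (simp add: vec_eq_iff forall_3 mat_def cols[folded u3_def] norm_eq_1 inner_commute)
  moreover have "det Q = 1"
  proof -
    have "det Q = u1 \<bullet> cross3 u2 u3"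
      by (simp add: Q_def dot_cross_det det_transpose)
    also have "\<dots> = u3 \<bullet> u3"
      by (metis cross_triple inner_commute u3_def)
    finally show ?thesis
      using \<open>u3 \<bullet> u3 = 1\<close> by simp
  qed
  ultimately show "rotation Q"
    by (simp add: rotation_def)
qed

lemma transpose_mult_mult_nth:
  fixes A :: "real^'n^'n"
  shows "(transpose P ** A ** Q) $ i $ j = column i P \<bullet> (A *v column j Q)"
  unfolding matrix_matrix_mult_def matrix_vector_mult_def inner_vec_def column_def transpose_def
  by (simp add: sum_distrib_left sum_distrib_right mult.assoc mult.left_commute) (rule sum.swap)

lemma rotation_orthogonal: "rotation Q \<Longrightarrow> orthogonal_matrix Q"
  by (simp add: rotation_def orthogonal_matrix)

theorem symmetric_matrix_rotation_diagonalizable: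
  assumes "sym_mat A"
  obtains Q d where "rotation Q" "A = Q ** diag d ** transpose Q"
proof -
  have sym: "transpose A = A"
    using assms by (simp add: sym_mat_def)
  obtain u1 c1 where "norm u1 = 1" and eig1: "A *v u1 = c1 *\<^sub>R u1"
    using symmetric_invariant_subspace_has_eigenvector[OF sym subspace_UNIV, of "axis 1 1"]
    by (auto simp: axis_eq_0_iff)
  define W where "W = {y. orthogonal u1 y}"
  have "A *v x \<in> W" if "x \<in> W" for x
    using that symmetric_inner_mult[OF sym, of u1 x]
    by (simp add: W_def orthogonal_def eig1 inner_commute)
  moreover obtain x0 where "x0 \<noteq> 0" "orthogonal u1 x0"
    using orthogonal_to_vector_exists[of u1] by auto
  ultimately obtain u2 c2 where "u2 \<in> W" "norm u2 = 1" and eig2: "A *v u2 = c2 *\<^sub>R u2"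
    using symmetric_invariant_subspace_has_eigenvector[OF sym, of W x0]
    by (auto simp: W_def subspace_orthogonal_to_vector)
  then have "u1 \<bullet> u2 = 0"
    by (simp add: W_def orthogonal_def)
  with \<open>norm u1 = 1\<close> \<open>norm u2 = 1\<close> obtain Q where Q: "rotation Q"
    and cols: "column 1 Q = u1" "column 2 Q = u2" "column 3 Q = cross3 u1 u2"
    by (rule rotation_from_orthonormal_pair)
  define M where "M = transpose Q ** A ** Q"
  have "M $ i $ j = 0" if "i \<noteq> j" for i j
  proof -
    \<comment> \<open>By symmetry of A, the third column cross3 u1 u2 is orthogonal to A u1 and A u2.\<close>
    have "u1 \<bullet> (A *v cross3 u1 u2) = 0" "u2 \<bullet> (A *v cross3 u1 u2) = 0"
      using symmetric_inner_mult[OF sym, of u1 "cross3 u1 u2"]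
        symmetric_inner_mult[OF sym, of u2 "cross3 u1 u2"]
      by (simp_all add: eig1 eig2 dot_cross_self)
    then show ?thesis
      using that exhaust_3[of i] exhaust_3[of j] \<open>u1 \<bullet> u2 = 0\<close>
      by (auto simp: M_def transpose_mult_mult_nth cols eig1 eig2 dot_cross_self inner_commute)
  qed
  then have "M = diag (\<lambda>i. M $ i $ i)"
    by (simp add: diag_eq_iff_offdiag_zero)
  moreover have "A = Q ** M ** transpose Q"
    using rotation_orthogonal[OF Q]
    by (simp add: M_def orthogonal_matrix_cancel matrix_mul_assoc orthogonal_matrix_def)
  ultimately show ?thesis
    using that Q by metis
qed

lemma sym_mat_orthogonal_conj_diag: "sym_mat (Q ** diag a ** transpose Q)"
  by (simp add: sym_mat_def transpose_orthogonal_conj_diag)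

lemma spd_orthogonal_conj_diag_iff:
  assumes Q: "orthogonal_matrix Q"
  shows "spd (Q ** diag b ** transpose Q) \<longleftrightarrow> (\<forall>i. b i > 0)"
proof
  assume spd: "spd (Q ** diag b ** transpose Q)"
  show "\<forall>i. b i > 0"
  proof
    fix k
    have "column k Q \<bullet> column k Q = 1"
      using Q unfolding orthogonal_matrix_orthonormal_columns by (simp add: norm_eq_1)
    then have "column k Q \<bullet> ((Q ** diag b ** transpose Q) *v column k Q) = b k"
      by (simp add: orthogonal_conj_diag_column[OF Q])
    moreover have "column k Q \<noteq> 0"
      using \<open>column k Q \<bullet> column k Q = 1\<close> by auto
    ultimately show "b k > 0"
      using spd by (auto simp: spd_def)
  qed
next
  assume pos: "\<forall>i. b i > 0"
  have "x \<bullet> ((Q ** diag b ** transpose Q) *v x) > 0" if "x \<noteq> 0" for x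
  proof -
    define y where "y = transpose Q *v x"
    have "Q *v y = x"
      using Q unfolding y_def matrix_vector_mul_assoc by (simp add: orthogonal_matrix_def)
    then have "y \<noteq> 0"
      using \<open>x \<noteq> 0\<close> by auto
    then obtain i where "y $ i \<noteq> 0"
      by (auto simp: vec_eq_iff)
    have "(Q ** diag b ** transpose Q) *v x = Q *v (diag b *v y)"
      by (simp only: y_def matrix_vector_mul_assoc matrix_mul_assoc)
    then have "x \<bullet> ((Q ** diag b ** transpose Q) *v x) = y \<bullet> (diag b *v y)"
      by (simp only: y_def transpose_matrix_vector dot_lmul_matrix)
    also have "\<dots> = (\<Sum>j\<in>UNIV. b j * (y $ j)\<^sup>2)"
      by (simp add: inner_vec_def diag_mult_vector_nth power2_eq_square algebra_simps)
    also have "\<dots> > 0"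
      using pos \<open>y $ i \<noteq> 0\<close> by (intro sum_pos2[of UNIV i]) (auto simp: less_imp_le)
    finally show ?thesis .
  qed
  then show "spd (Q ** diag b ** transpose Q)"
    by (simp add: spd_def sym_mat_orthogonal_conj_diag)
qed

lemma matpow_orthogonal_conj_diag:
  assumes "orthogonal_matrix Q"
  shows "matpow (Q ** diag d ** transpose Q) n = Q ** diag (\<lambda>i. d i ^ n) ** transpose Q"
  by (induction n) (use assms in \<open>simp_all add: diag_1 orthogonal_matrix_def orthogonal_conj_diag_mult\<close>)

lemma diag_eq_sum_unit_diag:
  fixes d :: "'n::finite \<Rightarrow> real"
  shows "diag d = (\<Sum>i\<in>UNIV. d i *\<^sub>R diag (\<lambda>j. if j = i then 1 else 0))"
proof -
  have "(\<Sum>x\<in>UNIV. d x * (if i = x then 1 else 0)) = d i" for i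
    by (simp add: if_distrib cong: if_cong)
  then show ?thesis
    by (simp add: vec_eq_iff sum_component diag_def)
qed

lemma mexp_diag: "mexp (diag d) = diag (\<lambda>i. exp (d i))"
proof -
  let ?E = "\<lambda>i. diag (\<lambda>j. if j = i then 1 else 0) :: mat3"
  have "(\<lambda>n. \<Sum>i\<in>UNIV. (d i ^ n /\<^sub>R fact n) *\<^sub>R ?E i) sums (\<Sum>i\<in>UNIV. exp (d i) *\<^sub>R ?E i)"
    by (intro sums_sum sums_scaleR_left exp_converges)
  moreover have "(\<Sum>i\<in>UNIV. (d i ^ n /\<^sub>R fact n) *\<^sub>R ?E i) = (1 / fact n) *\<^sub>R matpow (diag d) n" for n
    using matpow_orthogonal_conj_diag[OF orthogonal_matrix_id, of d n]
    by (simp add: diag_eq_sum_unit_diag[of "\<lambda>i. d i ^ n"] scaleR_sum_right divide_inverse_commute)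
  ultimately have "(\<lambda>n. (1 / fact n) *\<^sub>R matpow (diag d) n) sums diag (\<lambda>i. exp (d i))"
    by (simp flip: diag_eq_sum_unit_diag)
  then show ?thesis
    by (rule sums_unique2[OF mexp_sums])
qed

lemma mexp_orthogonal_conj_diag:
  assumes Q: "orthogonal_matrix Q"
  shows "mexp (Q ** diag d ** transpose Q) = Q ** diag (\<lambda>i. exp (d i)) ** transpose Q"
proof -
  have "bounded_linear (\<lambda>M::mat3. Q ** M ** transpose Q)"
    using bounded_bilinear.bounded_linear_left[OF bounded_bilinear_matrix_mult]
      bounded_bilinear.bounded_linear_right[OF bounded_bilinear_matrix_mult]
    by (rule bounded_linear_compose)
  from bounded_linear.sums[OF this mexp_sums]
  have "(\<lambda>n. Q ** ((1 / fact n) *\<^sub>R matpow (diag d) n) ** transpose Q) sums (Q ** mexp (diag d) ** transpose Q)" .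
  moreover have "Q ** ((1 / fact n) *\<^sub>R matpow (diag d) n) ** transpose Q = (1 / fact n) *\<^sub>R matpow (Q ** diag d ** transpose Q) n" for n
    using matpow_orthogonal_conj_diag[OF orthogonal_matrix_id, of d n]
    by (simp add: matpow_orthogonal_conj_diag[OF Q] matrix_scalar_ac scalar_matrix_assoc)
  ultimately show ?thesis
    using sums_unique2[OF mexp_sums] by (simp add: mexp_diag)
qed

lemma spd_mexp:
  assumes "sym_mat X"
  shows "spd (mexp X)"
proof -
  obtain Q d where "rotation Q" and X: "X = Q ** diag d ** transpose Q"
    using symmetric_matrix_rotation_diagonalizable[OF assms] .
  from \<open>rotation Q\<close> have Q: "orthogonal_matrix Q"
    by (rule rotation_orthogonal)
  show ?thesis
    unfolding X mexp_orthogonal_conj_diag[OF Q] spd_orthogonal_conj_diag_iff[OF Q] by simp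
qed

section \<open>Isotropic gradients\<close>

lemma rotation_orthogonal_conj_sign_diag:
  assumes Q: "rotation Q" and s: "\<And>i. s i * s i = 1" "s 1 * s 2 * s 3 = 1"
  shows "rotation (Q ** diag s ** transpose Q)"
proof -
  have oQ: "orthogonal_matrix Q"
    using Q by (rule rotation_orthogonal)
  have "transpose (Q ** diag s ** transpose Q) ** (Q ** diag s ** transpose Q)
      = Q ** diag (\<lambda>i. s i * s i) ** transpose Q"
    unfolding transpose_orthogonal_conj_diag by (rule orthogonal_conj_diag_mult[OF oQ])
  also have "\<dots> = mat 1"
    using oQ by (simp add: s(1) diag_1 orthogonal_matrix_def)
  finally have "transpose (Q ** diag s ** transpose Q) ** (Q ** diag s ** transpose Q) = mat 1" .
  moreover have "det (diag s) = 1"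
  proof -
    have "det (diag s) = (\<Prod>i\<in>UNIV. s i)"
      by (subst det_diagonal) (simp_all add: diag_def)
    also have "\<dots> = s 1 * s 2 * s 3"
      unfolding UNIV_3 by (simp add: ac_simps)
    finally show ?thesis
      using s(2) by simp
  qed
  then have "det (Q ** diag s ** transpose Q) = 1"
    using Q by (simp add: det_mul det_transpose rotation_def)
  ultimately show ?thesis
    by (simp add: rotation_def)
qed

lemma isotropic_orthogonal_conj_diag:
  fixes h :: "mat3 \<Rightarrow> mat3"
  assumes iso: "\<And>R C. rotation R \<Longrightarrow> spd C \<Longrightarrow> transpose R ** h C ** R = h (transpose R ** C ** R)"
    and Q: "rotation Q" and B: "spd (Q ** diag b ** transpose Q)"
  obtains m where "h (Q ** diag b ** transpose Q) = Q ** diag m ** transpose Q"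
proof -
  have oQ: "orthogonal_matrix Q"
    using Q by (rule rotation_orthogonal)
  define H where "H = h (Q ** diag b ** transpose Q)"
  define M where "M = transpose Q ** H ** Q"
  have reflect: "s i * M $ i $ j * s j = M $ i $ j"
    if s: "\<And>i. s i * s i = 1" "s 1 * s 2 * s 3 = 1" for s i j
  proof -
    define R where "R = Q ** diag s ** transpose Q"
    have R: "rotation R" "transpose R = R"
      using rotation_orthogonal_conj_sign_diag[OF Q s] transpose_orthogonal_conj_diag
      by (simp_all add: R_def)
    have "R ** (Q ** diag b ** transpose Q) ** R = Q ** diag b ** transpose Q"
      using s(1) by (simp add: R_def orthogonal_conj_diag_mult[OF oQ] ac_simps)
    then have "R ** H ** R = H"
      using iso[OF R(1) B] by (simp add: H_def R(2))
    moreover have "transpose Q ** (R ** H ** R) ** Q = diag s ** M ** diag s"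
      using oQ by (simp add: R_def M_def matrix_mul_assoc orthogonal_matrix_cancel orthogonal_matrix_def)
    ultimately have "diag s ** M ** diag s = M"
      by (simp add: M_def)
    then show ?thesis
      by (metis diag_mult_nth mult_diag_nth)
  qed
  have reflect1: "(if i = 1 then 1 else -1) * M $ i $ j * (if j = 1 then 1 else -1) = M $ i $ j"
    and reflect2: "(if i = 2 then 1 else -1) * M $ i $ j * (if j = 2 then 1 else -1) = M $ i $ j"
    for i j :: 3
    by (rule reflect; simp)+
  have "M $ i $ j = 0" if "i \<noteq> j" for i j
    using reflect1[of i j] reflect2[of i j] that exhaust_3[of i] exhaust_3[of j] by auto
  then have "M = diag (\<lambda>i. M $ i $ i)"
    by (simp add: diag_eq_iff_offdiag_zero)
  moreover have "H = Q ** M ** transpose Q"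
    using oQ by (simp add: M_def matrix_mul_assoc orthogonal_matrix_cancel orthogonal_matrix_def)
  ultimately show ?thesis
    using that by (metis H_def)
qed

lemma mln_orthogonal_conj_diag:
  assumes Q: "orthogonal_matrix Q" and pos: "\<And>i. b i > 0"
  shows "mln (Q ** diag b ** transpose Q) = Q ** diag (\<lambda>i. ln (b i)) ** transpose Q"
  unfolding mln_def
proof (rule the_equality)
  show "sym_mat (Q ** diag (\<lambda>i. ln (b i)) ** transpose Q) \<and>
      mexp (Q ** diag (\<lambda>i. ln (b i)) ** transpose Q) = Q ** diag b ** transpose Q"
    using pos by (simp add: sym_mat_orthogonal_conj_diag mexp_orthogonal_conj_diag[OF Q])
  fix L assume L: "sym_mat L \<and> mexp L = Q ** diag b ** transpose Q"
  obtain P l where "rotation P" and L_eq: "L = P ** diag l ** transpose P"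
    using symmetric_matrix_rotation_diagonalizable L by blast
  then have P: "orthogonal_matrix P"
    by (simp add: rotation_orthogonal)
  have "inj_on exp (range l \<union> range (\<lambda>i. ln (b i)))"
    by (simp add: inj_on_def)
  moreover have "P ** diag (\<lambda>i. exp (l i)) ** transpose P = Q ** diag (\<lambda>i. exp (ln (b i))) ** transpose Q"
    using L pos by (simp add: L_eq mexp_orthogonal_conj_diag[OF P])
  ultimately show "L = Q ** diag (\<lambda>i. ln (b i)) ** transpose Q"
    unfolding L_eq by (rule orthogonal_conj_diag_eq_of_image_eq[OF P Q])
qed

lemma msqrt_orthogonal_conj_diag:
  assumes Q: "orthogonal_matrix Q" and pos: "\<And>i. b i > 0"
  shows "msqrt (Q ** diag b ** transpose Q) = Q ** diag (\<lambda>i. sqrt (b i)) ** transpose Q"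
  unfolding msqrt_def
proof (rule the_equality)
  show "spd (Q ** diag (\<lambda>i. sqrt (b i)) ** transpose Q) \<and>
      (Q ** diag (\<lambda>i. sqrt (b i)) ** transpose Q) ** (Q ** diag (\<lambda>i. sqrt (b i)) ** transpose Q)
        = Q ** diag b ** transpose Q"
    using pos by (simp add: spd_orthogonal_conj_diag_iff[OF Q] orthogonal_conj_diag_mult[OF Q] less_imp_le)
  fix S assume S: "spd S \<and> S ** S = Q ** diag b ** transpose Q"
  obtain P l where "rotation P" and S_eq: "S = P ** diag l ** transpose P"
    using symmetric_matrix_rotation_diagonalizable S by (auto simp: spd_def)
  then have P: "orthogonal_matrix P"
    by (simp add: rotation_orthogonal)
  have "l i > 0" for i
    using S by (simp add: S_eq spd_orthogonal_conj_diag_iff[OF P])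
  have "inj_on (\<lambda>x. x * x) (range l \<union> range (\<lambda>i. sqrt (b i)))"
    using \<open>\<And>i. l i > 0\<close> pos unfolding inj_on_def
    by (auto simp: power2_eq_iff_nonneg less_imp_le simp flip: power2_eq_square
        intro: real_sqrt_unique[symmetric])
  moreover have "P ** diag (\<lambda>i. l i * l i) ** transpose P = Q ** diag (\<lambda>i. sqrt (b i) * sqrt (b i)) ** transpose Q"
    using S pos by (simp add: S_eq orthogonal_conj_diag_mult[OF P] less_imp_le)
  ultimately show "S = Q ** diag (\<lambda>i. sqrt (b i)) ** transpose Q"
    unfolding S_eq by (rule orthogonal_conj_diag_eq_of_image_eq[OF P Q])
qed

lemma isotropic_codiagonalizable:
  fixes h :: "mat3 \<Rightarrow> mat3"
  assumes iso: "\<And>R C. rotation R \<Longrightarrow> spd C \<Longrightarrow> transpose R ** h C ** R = h (transpose R ** C ** R)"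
    and "spd B"
  obtains Q :: mat3 and b m where "orthogonal_matrix Q" "\<And>i. b i > 0"
    "B = Q ** diag b ** transpose Q" "h B = Q ** diag m ** transpose Q"
proof -
  obtain Q b where Q: "rotation Q" and B: "B = Q ** diag b ** transpose Q"
    using symmetric_matrix_rotation_diagonalizable \<open>spd B\<close> by (auto simp: spd_def)
  have oQ: "orthogonal_matrix Q"
    using Q by (rule rotation_orthogonal)
  have "\<And>i. b i > 0"
    using \<open>spd B\<close> by (simp add: B spd_orthogonal_conj_diag_iff[OF oQ])
  obtain m where "h B = Q ** diag m ** transpose Q"
    using isotropic_orthogonal_conj_diag[OF iso Q] \<open>spd B\<close> B by blast
  with oQ \<open>\<And>i. b i > 0\<close> B show ?thesis
    by (rule that)
qed

lemma comp_mexp_has_derivative: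
  fixes \<alpha> :: "mat3 \<Rightarrow> real" and h :: "mat3 \<Rightarrow> mat3"
  assumes grad: "\<And>C. spd C \<Longrightarrow> (\<alpha> has_derivative (\<lambda>dC. trace (h C ** dC))) (at C within Sym)"
    and "sym_mat X"
  shows "((\<alpha> \<circ> mexp) has_derivative (\<lambda>\<delta>. trace (h (mexp X) ** dmexp X \<delta>))) (at X within Sym)"
proof -
  have "mexp ` Sym \<subseteq> Sym"
    using spd_mexp by (auto simp: Sym_def spd_def)
  with grad[OF spd_mexp[OF \<open>sym_mat X\<close>]]
  have "(\<alpha> has_derivative (\<lambda>dC. trace (h (mexp X) ** dC))) (at (mexp X) within mexp ` Sym)"
    by (rule has_derivative_subset)
  from diff_chain_within[OF has_derivative_at_withinI[OF mexp_has_derivative] this]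
  show ?thesis
    by (simp add: o_def)
qed

theorem theorem2:
  fixes \<alpha> :: "mat3 \<Rightarrow> real" and h :: "mat3 \<Rightarrow> mat3"
  assumes h_sym: "\<And>C. spd C \<Longrightarrow> sym_mat (h C)"
    and grad: "\<And>C. spd C \<Longrightarrow>
       (\<alpha> has_derivative (\<lambda>dC. trace (h C ** dC))) (at C within Sym)"
    and iso: "\<And>R C. rotation R \<Longrightarrow> spd C \<Longrightarrow>
       transpose R ** h C ** R = h (transpose R ** C ** R)"
  shows "(\<forall>X. sym_mat X \<longrightarrow> (\<alpha> \<circ> mexp) differentiable (at X within Sym))
    \<and> (\<forall>B. spd B \<longrightarrow>
        ((\<alpha> \<circ> mexp) has_derivative
           (\<lambda>\<delta>. trace ((msqrt B ** h B ** msqrt B) ** \<delta>))) (at (mln B) within Sym))"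
proof (intro conjI allI impI)
  fix X assume "sym_mat X"
  with grad show "(\<alpha> \<circ> mexp) differentiable (at X within Sym)"
    by (rule differentiableI[OF comp_mexp_has_derivative])
next
  fix B assume "spd B"
  obtain Q :: mat3 and b m where Q: "orthogonal_matrix Q" and pos: "\<And>i. b i > 0"
    and B: "B = Q ** diag b ** transpose Q" and H: "h B = Q ** diag m ** transpose Q"
    using isotropic_codiagonalizable[OF iso \<open>spd B\<close>] by metis
  define L where "L = Q ** diag (\<lambda>i. ln (b i)) ** transpose Q"
  have "mexp L = B" "mln B = L"
    using pos by (simp_all add: L_def B mexp_orthogonal_conj_diag[OF Q] mln_orthogonal_conj_diag[OF Q])
  have "msqrt B = Q ** diag (\<lambda>i. sqrt (b i)) ** transpose Q"
    unfolding B by (rule msqrt_orthogonal_conj_diag[OF Q pos])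
  then have "msqrt B ** h B ** msqrt B = Q ** diag (\<lambda>i. sqrt (b i) * m i * sqrt (b i)) ** transpose Q"
    by (simp add: H orthogonal_conj_diag_mult[OF Q])
  also have "(\<lambda>i. sqrt (b i) * m i * sqrt (b i)) = (\<lambda>i. m i * b i)"
    using pos by (simp add: fun_eq_iff less_imp_le mult.commute mult.left_commute flip: mult.assoc)
  also have "Q ** diag (\<lambda>i. m i * b i) ** transpose Q = h B ** mexp L"
    unfolding \<open>mexp L = B\<close> H by (simp add: B orthogonal_conj_diag_mult[OF Q])
  finally have "trace ((msqrt B ** h B ** msqrt B) ** \<delta>) = trace (h B ** dmexp L \<delta>)" for \<delta>
    using trace_mult_dmexp[of "h B" L] orthogonal_conj_diag_commute[OF Q] by (simp add: H L_def)
  then show "((\<alpha> \<circ> mexp) has_derivative (\<lambda>\<delta>. trace ((msqrt B ** h B ** msqrt B) ** \<delta>))) (at (mln B) within Sym)"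
    using comp_mexp_has_derivative[OF grad sym_mat_orthogonal_conj_diag, of Q "\<lambda>i. ln (b i)"]
    by (simp add: \<open>mln B = L\<close> \<open>mexp L = B\<close> flip: L_def)
qed

end
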